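(* Suppose $\kappa$ is Mahlo and $\kappa\le\lambda$. Then for every function $f:P_\kappa\lambda\to P_\kappa\lambda$, the set $C_f$ is a $1$-club subset of $P_\kappa\lambda$.
   Context: $P_\kappa\lambda=\{x\subseteq\lambda:|x|<\kappa\}$, $\kappa_x=|x\cap\kappa|$. $C_f=\{x\in P_\kappa\lambda: x\cap\kappa\neq\emptyset,\ f[P_{\kappa_x}x]\subseteq P_{\kappa_x}x\}$. A set is strongly stationary if it meets every $C_f$; $\mathrm{NSS}_{\kappa,\lambda}$ is the ideal of non-strongly-stationary sets; for $x\in P_\kappa\lambda$, $\mathrm{NSS}_{\kappa_x,x}$ is the analogous ideal on $P_{\kappa_x}x$ (with $\kappa_x$ in place of $\kappa$, $x$ in place of $\lambda$). $C\subseteq P_\kappa\lambda$ is $1$-club iff $C\in\mathrm{NSS}^+_{\kappa,\lambda}$ and for every $x\in P_\kappa\lambda$ with $\kappa_x$ inaccessible and $C\cap P_{\kappa_x}x\in\mathrm{NSS}^+_{\kappa_x,x}$ we have $x\in C$. *)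

theory Defs
  imports Main "HOL-Library.Countable_Set"
begin

unbundle cardinal_syntax

(* Modelling conventions:
   kappa is represented by a set K with a cardinal (initial-ordinal) well-order r on it,
   so elements of K play the role of the ordinals < kappa; lambda >= kappa is represented
   by a set L with K \<subseteq> L. *)

definition Pk :: "'a set \<Rightarrow> 'a set \<Rightarrow> 'a set set" where
  "Pk K X = {x. x \<subseteq> X \<and> card_of (x) <o card_of (K)}"

text \<open>C_f relative to (K, X): kappa_x = |x \<inter> K|, and P_{kappa_x} x = Pk (x \<inter> K) x.\<close>
definition Cf :: "'a set \<Rightarrow> 'a set \<Rightarrow> ('a set \<Rightarrow> 'a set) \<Rightarrow> 'a set set" where
  "Cf K X f = {x \<in> Pk K X. x \<inter> K \<noteq> {} \<and> f ` Pk (x \<inter> K) x \<subseteq> Pk (x \<inter> K) x}"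

definition strongly_stationary :: "'a set \<Rightarrow> 'a set \<Rightarrow> 'a set set \<Rightarrow> bool" where
  "strongly_stationary K X S \<longleftrightarrow> S \<subseteq> Pk K X \<and>
     (\<forall>f. (\<forall>x\<in>Pk K X. f x \<in> Pk K X) \<longrightarrow> S \<inter> Cf K X f \<noteq> {})"

definition inaccessible :: "'b set \<Rightarrow> bool" where
  "inaccessible A \<longleftrightarrow> \<not> countable A \<and> regularCard (card_of A) \<and>
     (\<forall>B::'b set. card_of (B) <o card_of (A) \<longrightarrow> card_of (Pow B) <o card_of A)"

text \<open>The ordinal kappa_x (as a subset of K, i.e. the ordinals below |x \<inter> K|).\<close>
definition kappa_x :: "'a set \<Rightarrow> 'a rel \<Rightarrow> 'a set \<Rightarrow> 'a set" where
  "kappa_x K r x = {a \<in> K. card_of (underS r a) <o card_of (x \<inter> K)}"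

definition club :: "'a set \<Rightarrow> 'a rel \<Rightarrow> 'a set \<Rightarrow> bool" where
  "club K r C \<longleftrightarrow> C \<subseteq> K \<and> (\<forall>a\<in>K. \<exists>c\<in>C. (a, c) \<in> r) \<and>
     (\<forall>a\<in>K. underS r a \<noteq> {} \<and>
        (\<forall>b\<in>underS r a. \<exists>c\<in>C. b \<in> underS r c \<and> c \<in> underS r a) \<longrightarrow> a \<in> C)"

definition stationary :: "'a set \<Rightarrow> 'a rel \<Rightarrow> 'a set \<Rightarrow> bool" where
  "stationary K r S \<longleftrightarrow> S \<subseteq> K \<and> (\<forall>C. club K r C \<longrightarrow> S \<inter> C \<noteq> {})"

definition is_cardinal_pt :: "'a rel \<Rightarrow> 'a \<Rightarrow> bool" where
  "is_cardinal_pt r a \<longleftrightarrow> (\<forall>b\<in>underS r a. card_of (underS r b) <o card_of (underS r a))"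

definition mahlo :: "'a set \<Rightarrow> 'a rel \<Rightarrow> bool" where
  "mahlo K r \<longleftrightarrow> card_order_on K r \<and> inaccessible K \<and>
     stationary K r {a \<in> K. is_cardinal_pt r a \<and> inaccessible (underS r a)}"

definition one_club :: "'a set \<Rightarrow> 'a rel \<Rightarrow> 'a set \<Rightarrow> 'a set set \<Rightarrow> bool" where
  "one_club K r L C \<longleftrightarrow> C \<subseteq> Pk K L \<and> strongly_stationary K L C \<and>
     (\<forall>x\<in>Pk K L. inaccessible (x \<inter> K) \<and>
        strongly_stationary (kappa_x K r x) x (C \<inter> Pk (x \<inter> K) x) \<longrightarrow> x \<in> C)"

end

theory Submission
  imports Defs "HOL-Library.Countable_Set_Type"
begin

text \<open>
  Strong stationarity: C_f \<inter> C_g contains C_{f \<union> g}, so it suffices that every C_h is nonempty.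
  Build a continuous increasing chain X_\<alpha> (\<alpha> < \<kappa>) in P_\<kappa> \<lambda> whose successor step adds \<alpha> and h(y)
  for every y \<subseteq> X_\<alpha>; inaccessibility of \<kappa> keeps every X_\<alpha> in P_\<kappa> \<lambda>. The \<alpha> with X_\<alpha> \<inter> \<kappa> \<subseteq> \<alpha> and
  |X_\<beta>| < |\<alpha>| for all \<beta> < \<alpha> form a club, so since \<kappa> is Mahlo one of them is an inaccessible
  cardinal. Then X_\<alpha> \<inter> \<kappa> = \<alpha>, and by regularity of \<alpha> every y \<in> P_\<alpha> X_\<alpha> already lies in some X_\<beta>
  with \<beta> < \<alpha>, so h(y) \<subseteq> X_{\<beta>+1} has size < |\<alpha>|: X_\<alpha> \<in> C_h.

  Reflection: if y \<in> P_{\<kappa>_x} x had f(y) \<notin> P_{\<kappa>_x} x, strong stationarity applied to the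
  constant function y would give some z \<subseteq> x in C_f with y \<in> P_{\<kappa>_z} z, whence
  f(y) \<in> P_{\<kappa>_z} z \<subseteq> P_{\<kappa>_x} x.
\<close>

lemma finite_ordLess_infinite_card: "finite A \<Longrightarrow> infinite C \<Longrightarrow> |A| <o |C|"
  using finite_ordLess_infinite[OF card_of_Well_order card_of_Well_order]
  by (simp add: Field_card_of)

lemma card_of_insert_ordLess_infinite:
  assumes "infinite C" and "|A| <o |C|"
  shows "|insert b A| <o |C|"
proof -
  have "|{b}| <o |C|" using finite_ordLess_infinite_card assms(1) by blast
  then have "|{b} \<union> A| <o |C|" using card_of_Un_ordLess_infinite assms by blast
  thus ?thesis by simp
qed

lemma countable_ordLess_uncountable:
  assumes "countable A" and "\<not> countable C"
  shows "|A| <o |C|"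
proof -
  have "|UNIV :: nat set| <o |C|"
    using assms(2) not_ordLeq_iff_ordLess[OF card_of_Well_order card_of_Well_order]
    unfolding countable_card_of_nat by blast
  with assms(1) show ?thesis
    unfolding countable_card_of_nat using ordLeq_ordLess_trans by blast
qed

lemma inaccessible_infinite: "inaccessible M \<Longrightarrow> infinite M"
  unfolding inaccessible_def using countable_finite by blast

lemma inaccessible_stable: "inaccessible M \<Longrightarrow> stable |M|"
  unfolding inaccessible_def
  by (rule regularCard_stable[OF card_of_Card_order])
    (auto simp: Field_card_of dest: countable_finite)

lemma Pk_empty: "Pk {} X = {}"
  unfolding Pk_def using card_of_empty ordLess_ordLeq_trans ordLess_irreflexive by blast

lemma empty_in_Pk: "K \<noteq> {} \<Longrightarrow> {} \<in> Pk K X"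
  unfolding Pk_def using card_of_ordLess2[of K "{}"] by auto

lemma Pk_mono: "K \<subseteq> K' \<Longrightarrow> X \<subseteq> X' \<Longrightarrow> Pk K X \<subseteq> Pk K' X'"
  unfolding Pk_def using card_of_mono1 ordLess_ordLeq_trans by blast

lemma Pk_subset: "y \<in> Pk K X \<Longrightarrow> z \<subseteq> y \<Longrightarrow> z \<in> Pk K X"
  unfolding Pk_def using card_of_mono1 ordLeq_ordLess_trans by blast

lemma Pk_Un: "infinite K \<Longrightarrow> x \<in> Pk K X \<Longrightarrow> y \<in> Pk K X \<Longrightarrow> x \<union> y \<in> Pk K X"
  unfolding Pk_def using card_of_Un_ordLess_infinite by blast

lemma Cf_Un_subset: "Cf K X (\<lambda>y. f y \<union> g y) \<subseteq> Cf K X f \<inter> Cf K X g"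
  unfolding Cf_def using Pk_subset by blast

lemma strongly_stationary_nonempty: "strongly_stationary K X S \<Longrightarrow> S \<noteq> {}"
  unfolding strongly_stationary_def by (metis empty_iff inf_bot_left id_apply)

lemma strongly_stationary_ex_mem_Pk:
  assumes stat: "strongly_stationary k X S" and "k \<subseteq> K" and y: "y \<in> Pk k X"
  shows "\<exists>z\<in>S. y \<in> Pk (z \<inter> K) z"
proof -
  have "\<forall>g. (\<forall>w\<in>Pk k X. g w \<in> Pk k X) \<longrightarrow> S \<inter> Cf k X g \<noteq> {}"
    using stat unfolding strongly_stationary_def by blast
  with y have "S \<inter> Cf k X (\<lambda>_. y) \<noteq> {}" by (blast dest: spec[where x="\<lambda>_. y"])
  then obtain z where "z \<in> S" and ne: "z \<inter> k \<noteq> {}"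
    and const: "(\<lambda>_. y) ` Pk (z \<inter> k) z \<subseteq> Pk (z \<inter> k) z"
    unfolding Cf_def by blast
  from ne have "{} \<in> Pk (z \<inter> k) z" by (rule empty_in_Pk)
  then have "y \<in> Pk (z \<inter> k) z" using const by blast
  moreover have "Pk (z \<inter> k) z \<subseteq> Pk (z \<inter> K) z" using \<open>k \<subseteq> K\<close> by (intro Pk_mono) blast+
  ultimately show ?thesis using \<open>z \<in> S\<close> by blast
qed

locale card_order_set =
  fixes K :: "'a set" and r :: "'a rel"
  assumes card_order: "card_order_on K r"
begin

lemma well_order: "well_order_on K r"
  using card_order card_order_on_well_order_on by blast

lemma Field_r: "Field r = K"
  using well_order well_order_on_Field by blast

lemma wf_r: "wf (r - Id)"
  using well_order unfolding well_order_on_def by blast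

lemma underS_subset: "underS r a \<subseteq> K"
  using Order_Relation.underS_Field[of r a] Field_r by simp

lemma linear_order: "linear_order_on K r"
  using well_order unfolding well_order_on_def by blast

lemma underS_mono: "(a, b) \<in> r \<Longrightarrow> underS r a \<subseteq> underS r b"
proof (rule underS_incr)
  show "trans r" "antisym r"
    using linear_order unfolding linear_order_on_def partial_order_on_def preorder_on_def
    by blast+
qed

lemma underS_trans: "x \<in> underS r y \<Longrightarrow> y \<in> underS r z \<Longrightarrow> x \<in> underS r z"
  using underS_mono unfolding underS_def by blast

lemma not_underS:
  assumes "x \<in> K" and "y \<in> K" and "x \<notin> underS r y"
  shows "(y, x) \<in> r"
proof (cases "x = y")
  case True
  have "refl_on K r"
    using linear_order unfolding linear_order_on_def partial_order_on_def preorder_on_def by blast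
  with True assms(1) show ?thesis by (simp add: refl_onD)
next
  case False
  have "total_on K r" using linear_order unfolding linear_order_on_def by blast
  with False assms have "(x, y) \<in> r \<or> (y, x) \<in> r" unfolding total_on_def by blast
  with False assms(3) show ?thesis unfolding underS_def by blast
qed

lemma card_of_underS_less: "a \<in> K \<Longrightarrow> |underS r a| <o |K|"
  using card_of_underS[of r a] card_order card_of_unique[OF card_order] Field_r
    ordLess_ordIso_trans by fastforce

lemma ordLess_ordIso_underS:
  assumes "|A| <o |K|"
  shows "\<exists>b\<in>K. |A| =o |underS r b|"
proof -
  have wo: "Well_order r" using well_order Field_r by simp
  have "|A| <o r"
    using assms card_of_unique[OF card_order] ordLess_ordIso_trans ordIso_symmetric by blast
  then obtain b where b: "b \<in> Field r" "|A| =o Restr r (underS r b)"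
    using ordLess_iff_ordIso_Restr[OF wo card_of_Well_order] by blast
  have "Field (Restr r (underS r b)) = underS r b"
    using Field_Restr_ofilter[OF wo] wo_rel.underS_ofilter[of r b] wo unfolding wo_rel_def by blast
  then have "|A| =o |underS r b|"
    using card_of_cong[OF b(2)] by (simp add: Field_card_of)
  with b(1) Field_r show ?thesis by blast
qed

lemma card_of_Int_ordLeq_kappa_x:
  assumes "|x \<inter> K| <o |K|"
  shows "|x \<inter> K| \<le>o |kappa_x K r x|"
proof -
  define Q where "Q = {b\<in>K. |x \<inter> K| \<le>o |underS r b|}"
  obtain b0 where "b0 \<in> K" "|x \<inter> K| =o |underS r b0|"
    using ordLess_ordIso_underS[OF assms] by blast
  then have "b0 \<in> Q" unfolding Q_def using ordIso_iff_ordLeq by blast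
  then obtain b where b: "b \<in> Q" and least: "\<And>c. (c, b) \<in> r - Id \<Longrightarrow> c \<notin> Q"
    using wfE_min[OF wf_r] by blast
  have "underS r b \<subseteq> kappa_x K r x"
  proof
    fix c assume c: "c \<in> underS r b"
    have cK: "c \<in> K" using c underS_subset by blast
    have "\<not> |x \<inter> K| \<le>o |underS r c|"
      using least[of c] c cK unfolding Q_def underS_def by blast
    then have "|underS r c| <o |x \<inter> K|"
      using not_ordLeq_iff_ordLess[OF card_of_Well_order card_of_Well_order] by blast
    with cK show "c \<in> kappa_x K r x" unfolding kappa_x_def by blast
  qed
  then have "|underS r b| \<le>o |kappa_x K r x|" by (rule card_of_mono1)
  moreover have "|x \<inter> K| \<le>o |underS r b|" using b unfolding Q_def by blast
  ultimately show ?thesis using ordLeq_transitive by blast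
qed

lemma subset_bounded_in_regular:
  assumes stable: "stable |M|" and inf: "infinite M" and "M \<subseteq> K"
    and small: "\<And>b. b \<in> M \<Longrightarrow> |underS r b| <o |M|"
    and "B \<subseteq> M" and "|B| <o |M|"
  shows "\<exists>t\<in>M. B \<subseteq> underS r t"
proof (rule ccontr)
  assume unbounded: "\<not> ?thesis"
  have "M \<subseteq> (\<Union>b\<in>B. insert b (underS r b))"
  proof
    fix t assume "t \<in> M"
    then obtain b where "b \<in> B" "b \<notin> underS r t" using unbounded by blast
    moreover have "b \<in> K" "t \<in> K" using \<open>t \<in> M\<close> \<open>b \<in> B\<close> assms(3,5) by blast+
    ultimately have "(t, b) \<in> r" using not_underS by blast
    with \<open>b \<in> B\<close> show "t \<in> (\<Union>b\<in>B. insert b (underS r b))"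
      unfolding underS_def by blast
  qed
  then have "|M| \<le>o |\<Union>b\<in>B. insert b (underS r b)|" by (rule card_of_mono1)
  moreover have "|\<Union>b\<in>B. insert b (underS r b)| <o |M|"
  proof (rule stable_UNION[OF stable \<open>|B| <o |M|\<close>])
    fix b assume "b \<in> B"
    with \<open>B \<subseteq> M\<close> have "|underS r b| <o |M|" using small by blast
    then show "|insert b (underS r b)| <o |M|" by (rule card_of_insert_ordLess_infinite[OF inf])
  qed
  ultimately have "|M| <o |M|" by (rule ordLeq_ordLess_trans)
  then show False by (rule ordLess_irreflexive[THEN notE])
qed

end

locale inaccessible_card_order = card_order_set +
  assumes inaccessible: "inaccessible K"
begin

lemma infinite_K: "infinite K"
  using inaccessible_infinite[OF inaccessible] .

lemma bounded_in_K:
  assumes "A \<subseteq> K" and "|A| <o |K|"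
  shows "\<exists>t\<in>K. A \<subseteq> underS r t"
  using subset_bounded_in_regular[OF inaccessible_stable[OF inaccessible] infinite_K order_refl
      card_of_underS_less assms] .

lemma bounded_in_K_above_card:
  fixes B :: "'a set"
  assumes "A \<subseteq> K" and "|A| <o |K|" and "|B| <o |K|"
  shows "\<exists>t\<in>K. A \<subseteq> underS r t \<and> |B| <o |underS r t|"
proof -
  have "|Pow B| <o |K|" using inaccessible assms(3) unfolding inaccessible_def by blast
  then obtain b where "b \<in> K" and b: "|Pow B| =o |underS r b|"
    using ordLess_ordIso_underS by blast
  have "|insert b A| <o |K|" by (rule card_of_insert_ordLess_infinite[OF infinite_K assms(2)])
  then obtain t where "t \<in> K" and t: "insert b A \<subseteq> underS r t"
    using bounded_in_K[of "insert b A"] assms(1) \<open>b \<in> K\<close> by blast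
  have "(b, t) \<in> r" using t unfolding underS_def by blast
  then have "|underS r b| \<le>o |underS r t|" by (rule card_of_mono1[OF underS_mono])
  with ordLess_ordIso_trans[OF card_of_Pow b] have "|B| <o |underS r t|"
    by (rule ordLess_ordLeq_trans)
  with \<open>t \<in> K\<close> t show ?thesis by blast
qed

lemma supremum_of_sequence:
  fixes s :: "nat \<Rightarrow> 'a"
  assumes sK: "\<And>n. s n \<in> K"
  shows "\<exists>c\<in>K. (\<forall>n. (s n, c) \<in> r) \<and> (\<forall>b\<in>underS r c. \<exists>n. b \<in> underS r (s n))"
proof -
  have "\<not> countable K" using inaccessible unfolding inaccessible_def by blast
  moreover have "countable (range s)" by simp
  ultimately have "|range s| <o |K|" by (rule countable_ordLess_uncountable[rotated])
  moreover have "range s \<subseteq> K" using sK by blast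
  ultimately obtain u where "u \<in> K" "range s \<subseteq> underS r u"
    using bounded_in_K by blast
  define U where "U = {u\<in>K. \<forall>n. (s n, u) \<in> r}"
  have "\<forall>n. (s n, u) \<in> r" using \<open>range s \<subseteq> underS r u\<close> unfolding underS_def by blast
  with \<open>u \<in> K\<close> have "u \<in> U" unfolding U_def by blast
  then obtain c where c: "c \<in> U" and least: "\<And>b. (b, c) \<in> r - Id \<Longrightarrow> b \<notin> U"
    using wfE_min[OF wf_r] by blast
  have "\<exists>n. b \<in> underS r (s n)" if b: "b \<in> underS r c" for b
  proof -
    have "b \<in> K" using b underS_subset by blast
    moreover have "(b, c) \<in> r - Id" using b unfolding underS_def by blast
    then have "b \<notin> U" by (rule least)
    ultimately obtain n where "(s n, b) \<notin> r" unfolding U_def by blast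
    then have "b \<in> underS r (s n)" using not_underS[OF \<open>b \<in> K\<close> sK] by blast
    then show ?thesis ..
  qed
  moreover have "c \<in> K" "\<forall>n. (s n, c) \<in> r" using c unfolding U_def by blast+
  ultimately show ?thesis by blast
qed

end

locale closure_chain = inaccessible_card_order +
  fixes L :: "'a set" and h :: "'a set \<Rightarrow> 'a set"
  assumes K_subset_L: "K \<subseteq> L"
    and h_Pk: "\<And>y. y \<in> Pk K L \<Longrightarrow> h y \<in> Pk K L"
begin

definition step :: "'a set \<Rightarrow> 'a set" where
  "step x = x \<union> (\<Union>y\<in>Pow x. h y)"

definition stage :: "'a \<Rightarrow> 'a set" where
  "stage = wfrec (r - Id) (\<lambda>F a. \<Union>b\<in>underS r a. step (F b \<union> {b}))"

lemma stage_eq: "stage a = (\<Union>b\<in>underS r a. step (stage b \<union> {b}))"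
proof -
  have "stage a = (\<Union>b\<in>underS r a. step (cut stage (r - Id) a b \<union> {b}))"
    unfolding stage_def by (subst wfrec[OF wf_r]) simp
  also have "\<dots> = (\<Union>b\<in>underS r a. step (stage b \<union> {b}))"
    by (rule SUP_cong) (auto simp: cut_def underS_def)
  finally show ?thesis .
qed

lemma step_stage_subset: "b \<in> underS r a \<Longrightarrow> step (stage b \<union> {b}) \<subseteq> stage a"
  by (subst stage_eq[of a]) blast

lemma stage_memD: "e \<in> stage a \<Longrightarrow> \<exists>b\<in>underS r a. e \<in> step (stage b \<union> {b})"
  by (subst (asm) stage_eq) blast

lemma subset_step: "x \<subseteq> step x"
  unfolding step_def by blast

lemma stage_subset: "b \<in> underS r a \<Longrightarrow> stage b \<union> {b} \<subseteq> stage a"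
  using step_stage_subset subset_step by blast

lemma stage_mono:
  assumes "(d, e) \<in> r"
  shows "stage d \<subseteq> stage e"
proof (cases "d = e")
  case False
  with assms have "d \<in> underS r e" unfolding underS_def by blast
  then show ?thesis using stage_subset by blast
qed simp

lemma step_Pk:
  assumes "x \<in> Pk K L"
  shows "step x \<in> Pk K L"
proof -
  have "|x| <o |K|" using assms unfolding Pk_def by blast
  then have "|Pow x| <o |K|" using inaccessible unfolding inaccessible_def by blast
  have hy: "h y \<subseteq> L \<and> |h y| <o |K|" if "y \<in> Pow x" for y
  proof -
    have "y \<in> Pk K L" using Pk_subset[OF assms] that by blast
    then show ?thesis using h_Pk unfolding Pk_def by blast
  qed
  have "|\<Union>y\<in>Pow x. h y| <o |K|"
    by (rule stable_UNION[OF inaccessible_stable[OF inaccessible] \<open>|Pow x| <o |K|\<close>])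
      (use hy in blast)
  moreover have "(\<Union>y\<in>Pow x. h y) \<subseteq> L" using hy by blast
  ultimately have "(\<Union>y\<in>Pow x. h y) \<in> Pk K L" unfolding Pk_def by blast
  then show ?thesis unfolding step_def by (rule Pk_Un[OF infinite_K assms])
qed

lemma stage_Pk: "a \<in> K \<Longrightarrow> stage a \<in> Pk K L"
proof (induction a rule: wf_induct[OF wf_r])
  case (1 a)
  have P: "step (stage b \<union> {b}) \<in> Pk K L" if b: "b \<in> underS r a" for b
  proof (rule step_Pk)
    have "b \<in> K" using b underS_subset by blast
    moreover have "(b, a) \<in> r - Id" using b unfolding underS_def by blast
    ultimately have "stage b \<in> Pk K L" using 1(1) by blast
    then show "stage b \<union> {b} \<in> Pk K L"
      using \<open>b \<in> K\<close> K_subset_L card_of_insert_ordLess_infinite[OF infinite_K]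
      unfolding Pk_def by auto
  qed
  have "|\<Union>b\<in>underS r a. step (stage b \<union> {b})| <o |K|"
  proof (rule stable_UNION[OF inaccessible_stable[OF inaccessible] card_of_underS_less[OF 1(2)]])
    fix b assume "b \<in> underS r a"
    then show "|step (stage b \<union> {b})| <o |K|" using P unfolding Pk_def by blast
  qed
  moreover have "(\<Union>b\<in>underS r a. step (stage b \<union> {b})) \<subseteq> L"
    using P unfolding Pk_def by blast
  ultimately show ?case unfolding Pk_def by (subst stage_eq) blast
qed

definition closure_points :: "'a set" where
  "closure_points = {a\<in>K. stage a \<inter> K \<subseteq> underS r a \<and>
     (\<forall>d\<in>underS r a. |stage d| <o |underS r a| )}"

lemma closure_pointI:
  assumes "a \<in> K"
    and cofinal: "\<And>b. b \<in> underS r a \<Longrightarrow> \<exists>c\<in>underS r a. b \<in> underS r c \<and>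
       stage c \<inter> K \<subseteq> underS r a \<and> |stage c| <o |underS r a|"
  shows "a \<in> closure_points"
proof -
  have "stage a \<inter> K \<subseteq> underS r a"
  proof
    fix e assume e: "e \<in> stage a \<inter> K"
    then obtain b where b: "b \<in> underS r a" "e \<in> step (stage b \<union> {b})"
      using stage_memD by blast
    obtain c where c: "b \<in> underS r c" "stage c \<inter> K \<subseteq> underS r a"
      using cofinal[OF b(1)] by blast
    have "e \<in> stage c" using step_stage_subset[OF c(1)] b(2) by blast
    with e c(2) show "e \<in> underS r a" by blast
  qed
  moreover have "\<forall>d\<in>underS r a. |stage d| <o |underS r a|"
  proof
    fix d assume "d \<in> underS r a"
    then obtain c where c: "d \<in> underS r c" "|stage c| <o |underS r a|"
      using cofinal by blast
    have "(d, c) \<in> r" using c(1) unfolding underS_def by blast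
    then have "|stage d| \<le>o |stage c|" by (rule card_of_mono1[OF stage_mono])
    then show "|stage d| <o |underS r a|" using c(2) by (rule ordLeq_ordLess_trans)
  qed
  ultimately show ?thesis using \<open>a \<in> K\<close> unfolding closure_points_def by blast
qed

lemma closure_points_closed:
  assumes "a \<in> K"
    and limit: "\<forall>b\<in>underS r a. \<exists>c\<in>closure_points. b \<in> underS r c \<and> c \<in> underS r a"
  shows "a \<in> closure_points"
proof (rule closure_pointI[OF \<open>a \<in> K\<close>])
  fix b assume "b \<in> underS r a"
  then obtain c where c: "c \<in> closure_points" "b \<in> underS r c" "c \<in> underS r a"
    using limit by blast
  then obtain c' where c': "c' \<in> closure_points" "c \<in> underS r c'" "c' \<in> underS r a"
    using limit by blast
  have "underS r c \<subseteq> underS r a" "underS r c' \<subseteq> underS r a"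
    using c(3) c'(3) underS_mono unfolding underS_def by blast+
  moreover have "stage c \<inter> K \<subseteq> underS r c" "|stage c| <o |underS r c'|"
    using c(1) c' unfolding closure_points_def by blast+
  ultimately show "\<exists>c\<in>underS r a. b \<in> underS r c \<and>
      stage c \<inter> K \<subseteq> underS r a \<and> |stage c| <o |underS r a|"
    using c(2,3) card_of_mono1 ordLess_ordLeq_trans by blast
qed

lemma stage_bounded:
  assumes "a \<in> K"
  shows "\<exists>t\<in>K. insert a (stage a \<inter> K) \<subseteq> underS r t \<and> |stage a| <o |underS r t|"
proof -
  have small: "|stage a| <o |K|" using stage_Pk[OF assms] unfolding Pk_def by blast
  have "|stage a \<inter> K| \<le>o |stage a|" by (rule card_of_mono1) blast
  then have "|stage a \<inter> K| <o |K|" using small by (rule ordLeq_ordLess_trans)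
  then have "|insert a (stage a \<inter> K)| <o |K|"
    by (rule card_of_insert_ordLess_infinite[OF infinite_K])
  moreover have "insert a (stage a \<inter> K) \<subseteq> K" using assms by blast
  ultimately show ?thesis using bounded_in_K_above_card small by blast
qed

lemma closure_points_unbounded:
  assumes "a \<in> K"
  shows "\<exists>c\<in>closure_points. (a, c) \<in> r"
proof -
  obtain next_pt where next_pt: "\<And>a. a \<in> K \<Longrightarrow> next_pt a \<in> K \<and>
      insert a (stage a \<inter> K) \<subseteq> underS r (next_pt a) \<and> |stage a| <o |underS r (next_pt a)|"
    using stage_bounded by metis
  define s where "s n = (next_pt ^^ n) a" for n
  have sK: "s n \<in> K" for n
    by (induction n) (simp_all add: s_def assms next_pt)
  have s_Suc: "insert (s n) (stage (s n) \<inter> K) \<subseteq> underS r (s (Suc n))"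
    "|stage (s n)| <o |underS r (s (Suc n))|" for n
    using next_pt[OF sK[of n]] by (simp_all add: s_def)
  have "\<exists>c\<in>K. (\<forall>n. (s n, c) \<in> r) \<and> (\<forall>b\<in>underS r c. \<exists>n. b \<in> underS r (s n))"
    by (rule supremum_of_sequence) (rule sK)
  then obtain c where "c \<in> K" and above: "\<And>n. (s n, c) \<in> r"
    and below: "\<And>b. b \<in> underS r c \<Longrightarrow> \<exists>n. b \<in> underS r (s n)"
    by blast
  have "c \<in> closure_points"
  proof (rule closure_pointI[OF \<open>c \<in> K\<close>])
    fix b assume "b \<in> underS r c"
    then obtain n where "b \<in> underS r (s n)" using below by blast
    have sub: "underS r (s (Suc (Suc n))) \<subseteq> underS r c" by (rule underS_mono[OF above])
    have "s (Suc n) \<in> underS r c" using s_Suc(1)[of "Suc n"] sub by blast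
    moreover have "b \<in> underS r (s (Suc n))"
      using \<open>b \<in> underS r (s n)\<close> s_Suc(1)[of n] by (blast intro: underS_trans)
    moreover have "stage (s (Suc n)) \<inter> K \<subseteq> underS r c"
      using s_Suc(1)[of "Suc n"] sub by blast
    moreover have "|stage (s (Suc n))| <o |underS r c|"
      using s_Suc(2)[of "Suc n"] card_of_mono1[OF sub] by (rule ordLess_ordLeq_trans)
    ultimately show "\<exists>c'\<in>underS r c. b \<in> underS r c' \<and>
        stage c' \<inter> K \<subseteq> underS r c \<and> |stage c'| <o |underS r c|" by blast
  qed
  moreover have "(a, c) \<in> r" using above[of 0] by (simp add: s_def)
  ultimately show ?thesis by blast
qed

lemma closure_points_club: "club K r closure_points"
  unfolding club_def using closure_points_unbounded closure_points_closed
  unfolding closure_points_def by blast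

lemma subset_of_stage_in_earlier_stage:
  assumes bounded: "\<And>B. B \<subseteq> underS r a \<Longrightarrow> |B| <o |underS r a| \<Longrightarrow>
      \<exists>t\<in>underS r a. B \<subseteq> underS r t"
    and "y \<subseteq> stage a" and "|y| <o |underS r a|"
  shows "\<exists>t\<in>underS r a. y \<subseteq> stage t"
proof -
  have "\<forall>e\<in>y. \<exists>b. b \<in> underS r a \<and> e \<in> step (stage b \<union> {b})"
    using \<open>y \<subseteq> stage a\<close> stage_memD by blast
  then obtain \<beta> where \<beta>: "\<And>e. e \<in> y \<Longrightarrow> \<beta> e \<in> underS r a \<and> e \<in> step (stage (\<beta> e) \<union> {\<beta> e})"
    by metis
  have "|\<beta> ` y| <o |underS r a|"
    using card_of_image \<open>|y| <o |underS r a|\<close> by (rule ordLeq_ordLess_trans)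
  moreover have "\<beta> ` y \<subseteq> underS r a" using \<beta> by blast
  ultimately obtain t where "t \<in> underS r a" "\<beta> ` y \<subseteq> underS r t"
    using bounded by blast
  moreover have "y \<subseteq> stage t"
  proof
    fix e assume "e \<in> y"
    then have "\<beta> e \<in> underS r t" using \<open>\<beta> ` y \<subseteq> underS r t\<close> by blast
    then show "e \<in> stage t" using step_stage_subset \<beta>[OF \<open>e \<in> y\<close>] by blast
  qed
  ultimately show ?thesis by blast
qed

lemma stage_in_Cf:
  assumes a: "a \<in> closure_points" and inacc: "inaccessible (underS r a)"
    and card: "is_cardinal_pt r a"
  shows "stage a \<in> Cf K L h"
proof -
  let ?M = "underS r a"
  have "a \<in> K" and small: "\<And>d. d \<in> ?M \<Longrightarrow> |stage d| <o |?M|"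
    and "stage a \<inter> K \<subseteq> ?M"
    using a unfolding closure_points_def by blast+
  moreover have "?M \<subseteq> stage a \<inter> K" using stage_subset underS_subset by blast
  ultimately have stage_K: "stage a \<inter> K = ?M" by blast
  have infM: "infinite ?M" by (rule inaccessible_infinite[OF inacc])
  have small_underS: "\<And>b. b \<in> ?M \<Longrightarrow> |underS r b| <o |?M|"
    using card unfolding is_cardinal_pt_def by blast
  have bounded: "\<exists>t\<in>?M. B \<subseteq> underS r t" if "B \<subseteq> ?M" "|B| <o |?M|" for B
    by (rule subset_bounded_in_regular[OF inaccessible_stable[OF inacc] infM underS_subset
          small_underS that])
  have closed: "h y \<in> Pk ?M (stage a)" if y: "y \<in> Pk ?M (stage a)" for y
  proof -
    have "y \<subseteq> stage a" "|y| <o |?M|" using y unfolding Pk_def by blast+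
    then obtain t where "t \<in> ?M" "y \<subseteq> stage t"
      using subset_of_stage_in_earlier_stage[OF bounded] by blast
    have "|{t}| <o |?M|" by (rule finite_ordLess_infinite_card[OF _ infM]) simp
    then obtain c where "c \<in> ?M" "{t} \<subseteq> underS r c" using bounded \<open>t \<in> ?M\<close> by blast
    have "h y \<subseteq> step (stage t \<union> {t})" using \<open>y \<subseteq> stage t\<close> unfolding step_def by blast
    also have "\<dots> \<subseteq> stage c" using \<open>{t} \<subseteq> underS r c\<close> step_stage_subset by blast
    finally have "h y \<subseteq> stage c" .
    then have "|h y| <o |?M|" using small[OF \<open>c \<in> ?M\<close>] by (rule ordLeq_ordLess_trans[OF card_of_mono1])
    moreover have "h y \<subseteq> stage a" using \<open>h y \<subseteq> stage c\<close> stage_subset[OF \<open>c \<in> ?M\<close>] by blast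
    ultimately show ?thesis unfolding Pk_def by blast
  qed
  have "h ` Pk (stage a \<inter> K) (stage a) \<subseteq> Pk (stage a \<inter> K) (stage a)"
    unfolding stage_K using closed by blast
  moreover have "stage a \<inter> K \<noteq> {}" unfolding stage_K using infM by auto
  ultimately show ?thesis using stage_Pk[OF \<open>a \<in> K\<close>] unfolding Cf_def by blast
qed

end

lemma Cf_nonempty_if_mahlo:
  assumes "mahlo K r" and "K \<subseteq> L" and "\<forall>x\<in>Pk K L. h x \<in> Pk K L"
  shows "Cf K L h \<noteq> {}"
proof -
  interpret closure_chain K r L h
    using assms unfolding mahlo_def by unfold_locales auto
  obtain a where "a \<in> closure_points" "is_cardinal_pt r a" "inaccessible (underS r a)"
    using assms(1) closure_points_club unfolding mahlo_def stationary_def by blast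
  then show ?thesis using stage_in_Cf by blast
qed

lemma Cf_strongly_stationary_if_mahlo:
  assumes "mahlo K r" and "K \<subseteq> L" and f: "\<forall>x\<in>Pk K L. f x \<in> Pk K L"
  shows "strongly_stationary K L (Cf K L f)"
  unfolding strongly_stationary_def
proof (intro conjI allI impI)
  show "Cf K L f \<subseteq> Pk K L" unfolding Cf_def by blast
  fix g assume g: "\<forall>x\<in>Pk K L. g x \<in> Pk K L"
  have "infinite K" using assms(1) inaccessible_infinite unfolding mahlo_def by blast
  then have "\<forall>x\<in>Pk K L. f x \<union> g x \<in> Pk K L" using f g Pk_Un by blast
  then have "Cf K L (\<lambda>x. f x \<union> g x) \<noteq> {}" by (rule Cf_nonempty_if_mahlo[OF assms(1,2)])
  then show "Cf K L f \<inter> Cf K L g \<noteq> {}" using Cf_Un_subset by blast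
qed

lemma Cf_reflects:
  assumes "card_order_on K r" and "x \<in> Pk K L"
    and stat: "strongly_stationary (kappa_x K r x) x (Cf K L f \<inter> Pk (x \<inter> K) x)"
  shows "x \<in> Cf K L f"
proof (rule ccontr)
  assume "x \<notin> Cf K L f"
  let ?k = "kappa_x K r x"
  have "Pk (x \<inter> K) x \<noteq> {}" using strongly_stationary_nonempty[OF stat] by blast
  then have "x \<inter> K \<noteq> {}" by (auto simp: Pk_empty)
  with \<open>x \<notin> Cf K L f\<close> assms(2) have "\<not> f ` Pk (x \<inter> K) x \<subseteq> Pk (x \<inter> K) x"
    unfolding Cf_def by blast
  then obtain y where y: "y \<in> Pk (x \<inter> K) x" and fy: "f y \<notin> Pk (x \<inter> K) x"
    by blast
  have "x \<inter> K \<in> Pk K L" by (rule Pk_subset[OF assms(2)]) blast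
  then have "|x \<inter> K| <o |K|" unfolding Pk_def by blast
  then have "|x \<inter> K| \<le>o |?k|"
    by (rule card_order_set.card_of_Int_ordLeq_kappa_x[OF card_order_set.intro[OF assms(1)]])
  moreover have "y \<subseteq> x" "|y| <o |x \<inter> K|" using y unfolding Pk_def by blast+
  ultimately have "y \<in> Pk ?k x" unfolding Pk_def using ordLess_ordLeq_trans by blast
  moreover have "?k \<subseteq> K" unfolding kappa_x_def by blast
  ultimately obtain z where z: "z \<in> Cf K L f" "z \<in> Pk (x \<inter> K) x" "y \<in> Pk (z \<inter> K) z"
    using strongly_stationary_ex_mem_Pk[OF stat] by blast
  have "f y \<in> Pk (z \<inter> K) z" using z(1,3) unfolding Cf_def by blast
  moreover have "z \<subseteq> x" using z(2) unfolding Pk_def by blast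
  then have "Pk (z \<inter> K) z \<subseteq> Pk (x \<inter> K) x" by (intro Pk_mono) blast+
  ultimately show False using fy by blast
qed

theorem lemma5p1:
  fixes K L :: "'a set" and r :: "'a rel" and f :: "'a set \<Rightarrow> 'a set"
  assumes "card_order_on K r"
    and "mahlo K r"
    and "K \<subseteq> L"
    and "\<forall>x\<in>Pk K L. f x \<in> Pk K L"
  shows "one_club K r L (Cf K L f)"
proof -
  have "strongly_stationary K L (Cf K L f)"
    using Cf_strongly_stationary_if_mahlo assms(2-4) .
  moreover have "x \<in> Cf K L f"
    if "x \<in> Pk K L" "strongly_stationary (kappa_x K r x) x (Cf K L f \<inter> Pk (x \<inter> K) x)" for x
    using Cf_reflects[OF assms(1)] that .
  ultimately show ?thesis unfolding one_club_def strongly_stationary_def by blast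
qed

end
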